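(* Let $\mathsf{P}$ be a program of $\mathcal{H}$. If $\mathsf{P}$ is stratified, then its ground instantiation $\mathsf{Gr(P)}$ is locally stratified.
   Context: Types of $\mathcal{H}$: base types $\iota,o$; predicate types $\pi::=o\mid\rho\to\pi$; argument types $\rho::=\iota\mid\pi$. Terms are built from predicate/individual variables and constants and function symbols (types $\iota^n\to\iota$) by typed application; atoms are terms of type $o$; literals are atoms, equalities $(\mathsf{E}_1\approx\mathsf{E}_2)$ of terms of type $\iota$, and negated atoms $\sim\mathsf{E}$. A clause is $\mathsf{p}\,\mathsf{V}_1\cdots\mathsf{V}_n\leftarrow\mathsf{L}_1,\dots,\mathsf{L}_m$ with $\mathsf{p}$ a predicate constant of type $\rho_1\to\cdots\to\rho_n\to o$, distinct variables $\mathsf{V}_i:\rho_i$, literals $\mathsf{L}_j$; a program is a finite set of clauses. Stratified: predicate type $\pi$ is greater than $\pi'$ if $\pi=\rho_1\to\cdots\to\rho_n\to\pi'$, $n\ge1$. $\mathsf{P}$ is stratified if its predicate constants can be partitioned into finitely many sets $S_1,\dots,S_r$ ($\mathit{stratum}(\mathsf{r})=i$ iff $\mathsf{r}\in S_i$) such that for every clause $\mathsf{H}\leftarrow\mathsf{A}_1,\dots,\mathsf{A}_m,\sim\mathsf{B}_1,\dots,\sim\mathsf{B}_n$ with head predicate constant $\mathsf{p}$: if $\mathsf{A}_i$ starts with predicate constant $\mathsf{q}$ then $\mathit{stratum}(\mathsf{q})\le\mathit{stratum}(\mathsf{p})$; if $\mathsf{A}_i$ starts with predicate variable $\mathsf{Q}$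 then $\mathit{stratum}(\mathsf{q})\le\mathit{stratum}(\mathsf{p})$ for all predicate constants $\mathsf{q}$ of $\mathsf{P}$ of type greater than or equal to that of $\mathsf{Q}$; if $\mathsf{B}_i$ starts with predicate constant $\mathsf{q}$ then $\mathit{stratum}(\mathsf{q})<\mathit{stratum}(\mathsf{p})$; if $\mathsf{B}_i$ starts with predicate variable $\mathsf{Q}$ then $\mathit{stratum}(\mathsf{q})<\mathit{stratum}(\mathsf{p})$ for all predicate constants $\mathsf{q}$ of $\mathsf{P}$ of type greater than or equal to that of $\mathsf{Q}$. Ground instantiation: $U_{\mathsf{P},\rho}$ is the set of ground terms of type $\rho$ built from symbols of $\mathsf{P}$; $\mathsf{Gr(P)}$ is the set of all clauses obtained from clauses of $\mathsf{P}$ by substituting for every variable an element of $U_{\mathsf{P},\rho}$ of its type; it is a propositional program with Herbrand base $U_{\mathsf{P},o}$ (the ground atoms), ground equalities being constants. Local stratification: a propositional program with Herbrand base $B$ is locally stratified if $B$ can be partitioned into sets $S_1,S_2,\dots,S_\alpha,\dots$, $\alpha<\gamma$ for a countable ordinal $\gamma$, such that for every clause $\mathsf{H}\leftarrow\mathsf{A}_1,\dots,\mathsf{A}_m,\sim\mathsf{B}_1,\dots,\sim\mathsf{B}_n$, $\mathit{stratum}(\mathsf{A}_i)\le\mathit{stratum}(\mathsf{H})$ for all $i\le m$ and $\mathit{stratum}(\mathsf{B}_i)<\mathit{stratum}(\mathsf{H})$ for all $i\le n$, where $\mathit{stratum}(\mathsf{C})=\beta$ if $\mathsf{C}\in S_\beta$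 and $\mathit{stratum}(\mathsf{C})=0$ if $\mathsf{C}$ is a constant (a ground equality). *)

theory Defs
  imports Main
begin

datatype ty = TIota | TO | Arr ty ty

fun is_pred :: "ty \<Rightarrow> bool" where
  "is_pred TO = True"
| "is_pred (Arr r p) = ((r = TIota \<or> is_pred r) \<and> is_pred p)"
| "is_pred TIota = False"

definition is_arg :: "ty \<Rightarrow> bool" where
  "is_arg t \<longleftrightarrow> t = TIota \<or> is_pred t"

text \<open>Types iota^n -> iota of function symbols (n = 0: individual constants).\<close>
fun fun_ty :: "nat \<Rightarrow> ty" where
  "fun_ty 0 = TIota"
| "fun_ty (Suc n) = Arr TIota (fun_ty n)"

fun ty_ge :: "ty \<Rightarrow> ty \<Rightarrow> bool" where
  "ty_ge (Arr r p) p' = (Arr r p = p' \<or> ty_ge p p')"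
| "ty_ge t p' = (t = p')"

definition arrows :: "ty list \<Rightarrow> ty \<Rightarrow> ty" where
  "arrows rs t = foldr Arr rs t"

text \<open>Variables and constants are typed: a symbol is a name together with its type.
  Constants comprise predicate constants, individual constants and function symbols.\<close>
datatype ('v, 'c) trm = V 'v ty | C 'c ty | App "('v, 'c) trm" "('v, 'c) trm"

fun ty_of :: "('v, 'c) trm \<Rightarrow> ty option" where
  "ty_of (V v t) = Some t"
| "ty_of (C c t) = Some t"
| "ty_of (App f a) = (case ty_of f of
      Some (Arr r s) \<Rightarrow> (if ty_of a = Some r then Some s else None)
    | _ \<Rightarrow> None)"

fun vars_trm :: "('v, 'c) trm \<Rightarrow> ('v \<times> ty) set" where
  "vars_trm (V v t) = {(v, t)}"
| "vars_trm (C c t) = {}"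
| "vars_trm (App f a) = vars_trm f \<union> vars_trm a"

fun consts_trm :: "('v, 'c) trm \<Rightarrow> ('c \<times> ty) set" where
  "consts_trm (V v t) = {}"
| "consts_trm (C c t) = {(c, t)}"
| "consts_trm (App f a) = consts_trm f \<union> consts_trm a"

fun head_sym :: "('v, 'c) trm \<Rightarrow> ('v, 'c) trm" where
  "head_sym (App f a) = head_sym f"
| "head_sym t = t"

definition wf_trm :: "('v, 'c) trm \<Rightarrow> bool" where
  "wf_trm e \<longleftrightarrow> ty_of e \<noteq> None
     \<and> (\<forall>(v, t) \<in> vars_trm e. is_arg t)
     \<and> (\<forall>(c, t) \<in> consts_trm e. is_pred t \<or> (\<exists>n. t = fun_ty n))"

datatype ('v, 'c) lit = Pos "('v, 'c) trm" | Eq "('v, 'c) trm" "('v, 'c) trm" | Neg "('v, 'c) trm"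

fun wf_lit :: "('v, 'c) lit \<Rightarrow> bool" where
  "wf_lit (Pos a) = (wf_trm a \<and> ty_of a = Some TO)"
| "wf_lit (Neg a) = (wf_trm a \<and> ty_of a = Some TO)"
| "wf_lit (Eq e1 e2) = (wf_trm e1 \<and> wf_trm e2 \<and> ty_of e1 = Some TIota \<and> ty_of e2 = Some TIota)"

fun vars_lit :: "('v, 'c) lit \<Rightarrow> ('v \<times> ty) set" where
  "vars_lit (Pos a) = vars_trm a"
| "vars_lit (Neg a) = vars_trm a"
| "vars_lit (Eq e1 e2) = vars_trm e1 \<union> vars_trm e2"

fun consts_lit :: "('v, 'c) lit \<Rightarrow> ('c \<times> ty) set" where
  "consts_lit (Pos a) = consts_trm a"
| "consts_lit (Neg a) = consts_trm a"
| "consts_lit (Eq e1 e2) = consts_trm e1 \<union> consts_trm e2"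

text \<open>A clause p V1 ... Vn <- L1, ..., Lm is represented as (p, [V1,...,Vn], [L1,...,Lm]).\<close>
type_synonym ('v, 'c) clause = "('c \<times> ty) \<times> ('v \<times> ty) list \<times> ('v, 'c) lit list"

definition cl_pred :: "('v, 'c) clause \<Rightarrow> 'c \<times> ty" where
  "cl_pred cl = fst cl"

definition cl_body :: "('v, 'c) clause \<Rightarrow> ('v, 'c) lit list" where
  "cl_body cl = snd (snd cl)"

definition cl_head :: "('v, 'c) clause \<Rightarrow> ('v, 'c) trm" where
  "cl_head cl = foldl App (C (fst (fst cl)) (snd (fst cl))) (map (\<lambda>(v, t). V v t) (fst (snd cl)))"

definition wf_clause :: "('v, 'c) clause \<Rightarrow> bool" where
  "wf_clause cl \<longleftrightarrow>
     (case cl of ((p, tp), vs, body) \<Rightarrow>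
        is_pred tp \<and> tp = arrows (map snd vs) TO \<and> distinct vs
        \<and> (\<forall>(v, t) \<in> set vs. is_arg t)
        \<and> (\<forall>L \<in> set body. wf_lit L))"

definition program :: "('v, 'c) clause set \<Rightarrow> bool" where
  "program P \<longleftrightarrow> finite P \<and> (\<forall>cl \<in> P. wf_clause cl)"

definition vars_clause :: "('v, 'c) clause \<Rightarrow> ('v \<times> ty) set" where
  "vars_clause cl = vars_trm (cl_head cl) \<union> (\<Union>L \<in> set (cl_body cl). vars_lit L)"

definition consts_clause :: "('v, 'c) clause \<Rightarrow> ('c \<times> ty) set" where
  "consts_clause cl = consts_trm (cl_head cl) \<union> (\<Union>L \<in> set (cl_body cl). consts_lit L)"

definition syms :: "('v, 'c) clause set \<Rightarrow> ('c \<times> ty) set" where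
  "syms P = (\<Union>cl \<in> P. consts_clause cl)"

definition pred_consts :: "('v, 'c) clause set \<Rightarrow> ('c \<times> ty) set" where
  "pred_consts P = {q \<in> syms P. is_pred (snd q)}"

text \<open>Constraint on a body atom a of a clause with head predicate p; rel is \<le> (positive)
  or < (negative).\<close>
definition atom_ok :: "('v, 'c) clause set \<Rightarrow> ('c \<times> ty \<Rightarrow> nat) \<Rightarrow> (nat \<Rightarrow> nat \<Rightarrow> bool)
    \<Rightarrow> 'c \<times> ty \<Rightarrow> ('v, 'c) trm \<Rightarrow> bool" where
  "atom_ok P st rel p a \<longleftrightarrow>
     (case head_sym a of
        C q tq \<Rightarrow> rel (st (q, tq)) (st p)
      | V Q tQ \<Rightarrow> (\<forall>q \<in> pred_consts P. ty_ge (snd q) tQ \<longrightarrow> rel (st q) (st p))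
      | App _ _ \<Rightarrow> True)"

text \<open>The partition S_1, ..., S_r of the predicate constants is given by the stratum function st
  (its range on the finitely many predicate constants of P is finite). Equalities impose no constraint.\<close>
definition stratified :: "('v, 'c) clause set \<Rightarrow> bool" where
  "stratified P \<longleftrightarrow> (\<exists>st :: 'c \<times> ty \<Rightarrow> nat. \<forall>cl \<in> P. \<forall>L \<in> set (cl_body cl).
     (case L of
        Pos a \<Rightarrow> atom_ok P st (\<le>) (cl_pred cl) a
      | Neg a \<Rightarrow> atom_ok P st (<) (cl_pred cl) a
      | Eq _ _ \<Rightarrow> True))"

fun subst :: "('v \<times> ty \<Rightarrow> ('v, 'c) trm) \<Rightarrow> ('v, 'c) trm \<Rightarrow> ('v, 'c) trm" where
  "subst \<sigma> (V v t) = \<sigma> (v, t)"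
| "subst \<sigma> (C c t) = C c t"
| "subst \<sigma> (App f a) = App (subst \<sigma> f) (subst \<sigma> a)"

fun subst_lit :: "('v \<times> ty \<Rightarrow> ('v, 'c) trm) \<Rightarrow> ('v, 'c) lit \<Rightarrow> ('v, 'c) lit" where
  "subst_lit \<sigma> (Pos a) = Pos (subst \<sigma> a)"
| "subst_lit \<sigma> (Neg a) = Neg (subst \<sigma> a)"
| "subst_lit \<sigma> (Eq e1 e2) = Eq (subst \<sigma> e1) (subst \<sigma> e2)"

definition U :: "('v, 'c) clause set \<Rightarrow> ty \<Rightarrow> ('v, 'c) trm set" where
  "U P \<rho> = {e. vars_trm e = {} \<and> consts_trm e \<subseteq> syms P \<and> ty_of e = Some \<rho>}"

type_synonym ('v, 'c) gclause = "('v, 'c) trm \<times> ('v, 'c) lit list"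

definition Gr :: "('v, 'c) clause set \<Rightarrow> ('v, 'c) gclause set" where
  "Gr P = {(subst \<sigma> (cl_head cl), map (subst_lit \<sigma>) (cl_body cl)) | cl \<sigma>.
      cl \<in> P \<and> (\<forall>(v, t) \<in> vars_clause cl. \<sigma> (v, t) \<in> U P t)}"

text \<open>The strata indices alpha < gamma (gamma a countable ordinal) are represented by the field of a
  well-order r on (a subset of) nat; (x, y) \<in> r means x \<le> y. Ground equalities have stratum 0,
  the least ordinal, so a positive equality in a body imposes no constraint (0 \<le> stratum(H));
  equalities never occur negated.\<close>
definition locally_stratified :: "('v, 'c) trm set \<Rightarrow> ('v, 'c) gclause set \<Rightarrow> bool" where
  "locally_stratified B G \<longleftrightarrow>
     (\<exists>(r :: nat rel) (st :: ('v, 'c) trm \<Rightarrow> nat).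
        Well_order r \<and> (\<forall>a \<in> B. st a \<in> Field r) \<and>
        (\<forall>(h, body) \<in> G. \<forall>L \<in> set body.
           (case L of
              Pos a \<Rightarrow> (st a, st h) \<in> r
            | Neg a \<Rightarrow> (st a, st h) \<in> r \<and> st a \<noteq> st h
            | Eq _ _ \<Rightarrow> True)))"

end

theory Submission
  imports Defs
begin

text \<open>A ground atom gets the stratum of the predicate constant it starts with. If a body atom
  starts with a predicate variable Q, any ground instance of it starts with the head constant q of
  the term substituted for Q. Typing forces the type of q to be greater than or equal to that of Q,
  hence greater than or equal to o, so q is a predicate constant (not a function symbol) of P,
  and stratification bounds the stratum of q exactly as it bounds all such constants. Ordinary
  strata on nat therefore already form a local stratification.\<close>

lemma ty_ge_refl: "ty_ge t t"
  by (cases t) auto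

lemma ty_ge_trans: "ty_ge a b \<Longrightarrow> ty_ge b c \<Longrightarrow> ty_ge a c"
  by (induction a arbitrary: b) auto

lemma ty_ge_ArrD: "ty_ge t (Arr r s) \<Longrightarrow> ty_ge t s"
  by (induction t) (auto simp: ty_ge_refl)

lemma not_ty_ge_fun_ty_TO: "\<not> ty_ge (fun_ty n) TO"
  by (induction n) auto

lemma head_sym_foldl_App: "head_sym (foldl App x args) = head_sym x"
  by (induction args arbitrary: x) auto

lemma consts_trm_foldl_App_vars:
  "consts_trm (foldl App x (map (\<lambda>(v, t). V v t) vs)) = consts_trm x"
  by (induction vs arbitrary: x) auto

lemma head_sym_subst:
  "head_sym (subst \<sigma> t) =
     (case head_sym t of V v T \<Rightarrow> head_sym (\<sigma> (v, T)) | C c T \<Rightarrow> C c T | App f a \<Rightarrow> App f a)"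
  by (induction t) auto

lemma head_sym_cases:
  obtains v T where "head_sym t = V v T" "(v, T) \<in> vars_trm t"
  | c T where "head_sym t = C c T" "(c, T) \<in> consts_trm t"
  by (induction t) auto

lemma ty_ge_ty_of_head_sym: "ty_of e = Some T \<Longrightarrow> ty_of (head_sym e) = Some T' \<Longrightarrow> ty_ge T' T"
proof (induction e arbitrary: T)
  case (App f a)
  then obtain r where "ty_of f = Some (Arr r T)"
    by (auto split: option.splits ty.splits if_splits)
  with App.IH(1) App.prems(2) have "ty_ge T' (Arr r T)"
    by simp
  then show ?case
    by (rule ty_ge_ArrD)
qed (auto simp: ty_ge_refl)

lemma consts_clause_wf:
  assumes "wf_clause cl" and "(c, t) \<in> consts_clause cl"
  shows "is_pred t \<or> (\<exists>n. t = fun_ty n)"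
proof -
  obtain p tp vs body where cl: "cl = ((p, tp), vs, body)"
    by (cases cl) auto
  have "is_pred tp" and body_wf: "\<forall>L \<in> set body. wf_lit L"
    using assms(1) by (auto simp: cl wf_clause_def)
  have "(c, t) = (p, tp) \<or> (\<exists>L \<in> set body. (c, t) \<in> consts_lit L)"
    using assms(2) by (simp add: cl consts_clause_def cl_head_def cl_body_def consts_trm_foldl_App_vars)
  then show ?thesis
  proof
    assume "\<exists>L \<in> set body. (c, t) \<in> consts_lit L"
    then obtain L where "L \<in> set body" and "(c, t) \<in> consts_lit L"
      by blast
    moreover from this(1) have "wf_lit L"
      using body_wf by blast
    ultimately show ?thesis
      by (fastforce simp: wf_trm_def elim!: wf_lit.elims)
  qed (use \<open>is_pred tp\<close> in simp)
qed

lemma syms_wf: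
  assumes "program P" and "(c, t) \<in> syms P"
  shows "is_pred t \<or> (\<exists>n. t = fun_ty n)"
proof -
  obtain cl where "cl \<in> P" and c: "(c, t) \<in> consts_clause cl"
    using assms(2) by (auto simp: syms_def)
  with assms(1) have "wf_clause cl"
    by (simp add: program_def)
  then show ?thesis
    using c by (rule consts_clause_wf)
qed

lemma body_lit_wf: "program P \<Longrightarrow> cl \<in> P \<Longrightarrow> L \<in> set (cl_body cl) \<Longrightarrow> wf_lit L"
  by (cases cl) (auto simp: program_def wf_clause_def cl_body_def)

lemma ground_term_head_pred_const:
  assumes "program P" and "e \<in> U P T" and "ty_ge T TO"
  obtains q tq where "head_sym e = C q tq" "(q, tq) \<in> pred_consts P" "ty_ge tq T"
proof -
  obtain q tq where hd: "head_sym e = C q tq" and "(q, tq) \<in> consts_trm e"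
    using assms(2) by (cases e rule: head_sym_cases) (auto simp: U_def)
  then have syms: "(q, tq) \<in> syms P"
    using assms(2) by (auto simp: U_def)
  have ge: "ty_ge tq T"
    using ty_ge_ty_of_head_sym[of e T tq] assms(2) hd by (simp add: U_def)
  then have "ty_ge tq TO"
    using assms(3) by (rule ty_ge_trans)
  then have "is_pred tq"
    using syms_wf[OF assms(1) syms] not_ty_ge_fun_ty_TO by auto
  with syms have "(q, tq) \<in> pred_consts P"
    by (simp add: pred_consts_def)
  with hd ge show thesis
    using that by blast
qed

definition ground_stratum :: "('c \<times> ty \<Rightarrow> nat) \<Rightarrow> ('v, 'c) trm \<Rightarrow> nat" where
  "ground_stratum st a = (case head_sym a of C q tq \<Rightarrow> st (q, tq) | _ \<Rightarrow> 0)"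

lemma ground_stratum_subst_head: "ground_stratum st (subst \<sigma> (cl_head cl)) = st (cl_pred cl)"
  by (simp add: ground_stratum_def head_sym_subst cl_head_def head_sym_foldl_App cl_pred_def)

lemma atom_ok_ground_stratum:
  assumes "program P" and "atom_ok P st rel p a" and "ty_of a = Some TO"
    and \<sigma>: "\<forall>(v, t) \<in> vars_trm a. \<sigma> (v, t) \<in> U P t"
  shows "rel (ground_stratum st (subst \<sigma> a)) (st p)"
proof (cases a rule: head_sym_cases)
  case (1 Q tQ)
  have "ty_ge tQ TO"
    using ty_ge_ty_of_head_sym[of a TO tQ] 1 assms(3) by simp
  moreover have "\<sigma> (Q, tQ) \<in> U P tQ"
    using \<sigma> 1 by blast
  ultimately obtain q tq where hd: "head_sym (\<sigma> (Q, tQ)) = C q tq"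
      and "(q, tq) \<in> pred_consts P" and "ty_ge tq tQ"
    using ground_term_head_pred_const assms(1) by blast
  with assms(2) 1 have "rel (st (q, tq)) (st p)"
    by (auto simp: atom_ok_def)
  moreover have "ground_stratum st (subst \<sigma> a) = st (q, tq)"
    by (simp add: ground_stratum_def head_sym_subst 1 hd)
  ultimately show ?thesis
    by simp
next
  case (2 q tq)
  then show ?thesis
    using assms(2) by (simp add: atom_ok_def ground_stratum_def head_sym_subst)
qed

lemma ground_instance_respects_strata:
  assumes "program P" and "wf_lit L"
    and "case L of Pos a \<Rightarrow> atom_ok P st (\<le>) p a | Neg a \<Rightarrow> atom_ok P st (<) p a | Eq _ _ \<Rightarrow> True"
    and "\<forall>(v, t) \<in> vars_lit L. \<sigma> (v, t) \<in> U P t"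
  shows "case subst_lit \<sigma> L of
           Pos a \<Rightarrow> ground_stratum st a \<le> st p
         | Neg a \<Rightarrow> ground_stratum st a < st p
         | Eq _ _ \<Rightarrow> True"
proof (cases L)
  case (Pos a)
  with assms show ?thesis
    using atom_ok_ground_stratum[of P st "(\<le>)" p a \<sigma>] by simp
next
  case (Neg a)
  with assms show ?thesis
    using atom_ok_ground_stratum[of P st "(<)" p a \<sigma>] by simp
qed simp

lemma locally_stratified_natI:
  fixes st :: "('v, 'c) trm \<Rightarrow> nat"
  assumes "\<And>h body L. (h, body) \<in> G \<Longrightarrow> L \<in> set body \<Longrightarrow>
    (case L of Pos a \<Rightarrow> st a \<le> st h | Neg a \<Rightarrow> st a < st h | Eq _ _ \<Rightarrow> True)"
  shows "locally_stratified B G"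
  unfolding locally_stratified_def
proof (intro exI conjI)
  show "Well_order natLeq"
    by (rule natLeq_Well_order)
  show "\<forall>a \<in> B. st a \<in> Field natLeq"
    by (simp add: Field_natLeq)
  show "\<forall>(h, body) \<in> G. \<forall>L \<in> set body. case L of
      Pos a \<Rightarrow> (st a, st h) \<in> natLeq
    | Neg a \<Rightarrow> (st a, st h) \<in> natLeq \<and> st a \<noteq> st h
    | Eq _ _ \<Rightarrow> True"
  proof (intro ballI, clarify)
    fix h body L
    assume "(h, body) \<in> G" and "L \<in> set body"
    then have "case L of Pos a \<Rightarrow> st a \<le> st h | Neg a \<Rightarrow> st a < st h | Eq _ _ \<Rightarrow> True"
      by (rule assms)
    then show "case L of
        Pos a \<Rightarrow> (st a, st h) \<in> natLeq
      | Neg a \<Rightarrow> (st a, st h) \<in> natLeq \<and> st a \<noteq> st h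
      | Eq _ _ \<Rightarrow> True"
      by (cases L) (simp_all add: natLeq_def)
  qed
qed

lemma Gr_respects_ground_strata:
  assumes "program P"
    and st: "\<forall>cl \<in> P. \<forall>L \<in> set (cl_body cl). case L of
        Pos a \<Rightarrow> atom_ok P st (\<le>) (cl_pred cl) a
      | Neg a \<Rightarrow> atom_ok P st (<) (cl_pred cl) a
      | Eq _ _ \<Rightarrow> True"
    and "(h, body) \<in> Gr P" and "L \<in> set body"
  shows "case L of
      Pos a \<Rightarrow> ground_stratum st a \<le> ground_stratum st h
    | Neg a \<Rightarrow> ground_stratum st a < ground_stratum st h
    | Eq _ _ \<Rightarrow> True"
proof -
  obtain cl \<sigma> L\<^sub>0 where cl: "cl \<in> P" and L\<^sub>0: "L\<^sub>0 \<in> set (cl_body cl)"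
    and \<sigma>: "\<forall>(v, t) \<in> vars_clause cl. \<sigma> (v, t) \<in> U P t"
    and h: "h = subst \<sigma> (cl_head cl)" and L: "L = subst_lit \<sigma> L\<^sub>0"
    using assms(3,4) by (auto simp: Gr_def)
  have head: "ground_stratum st h = st (cl_pred cl)"
    by (simp add: h ground_stratum_subst_head)
  have "case L\<^sub>0 of
      Pos a \<Rightarrow> atom_ok P st (\<le>) (cl_pred cl) a
    | Neg a \<Rightarrow> atom_ok P st (<) (cl_pred cl) a
    | Eq _ _ \<Rightarrow> True"
    using st cl L\<^sub>0 by blast
  moreover have "\<forall>(v, t) \<in> vars_lit L\<^sub>0. \<sigma> (v, t) \<in> U P t"
    using \<sigma> L\<^sub>0 by (auto simp: vars_clause_def)
  ultimately show ?thesis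
    unfolding L head
    by (rule ground_instance_respects_strata[OF assms(1) body_lit_wf[OF assms(1) cl L\<^sub>0]])
qed

theorem lemma2:
  fixes P :: "('v, 'c) clause set"
  assumes "program P" and "stratified P"
  shows "locally_stratified (U P TO) (Gr P)"
proof -
  obtain st :: "'c \<times> ty \<Rightarrow> nat" where st: "\<forall>cl \<in> P. \<forall>L \<in> set (cl_body cl).
     (case L of
        Pos a \<Rightarrow> atom_ok P st (\<le>) (cl_pred cl) a
      | Neg a \<Rightarrow> atom_ok P st (<) (cl_pred cl) a
      | Eq _ _ \<Rightarrow> True)"
    using assms(2) unfolding stratified_def by blast
  show ?thesis
    by (rule locally_stratified_natI[where st = "ground_stratum st"])
      (rule Gr_respects_ground_strata[OF assms(1) st])
qed

end
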